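(* Let $\gamma\in\mathbb{R}$ and $\epsilon_{\text{abs}}>0$, and let $\hat g_{-,\gamma}\in\arg\min_{f\in\mathcal{F}}\hat h_{-,\gamma}(f)$. If $\hat h_{-,\gamma}(\hat g_{-,\gamma})\ge0$, then $$\frac{\hat h_{-,\gamma}(\hat g_{-,\gamma})}{\epsilon_{\text{abs}}}-\gamma\le\widehat{MR}(f)$$ for all $f\in\mathcal{F}$ with $\hat e_{\text{orig}}(f)\le\epsilon_{\text{abs}}$; moreover $-\gamma\le\widehat{MR}(f)$ for all $f\in\mathcal{F}$. Additionally, if $\hat h_{-,\gamma}(\hat g_{-,\gamma})\ge0$ and $\hat e_{\text{orig}}(\hat g_{-,\gamma})\le\epsilon_{\text{abs}}$ with at least one of these two inequalities holding with equality, then the displayed inequality holds with equality for $f=\hat g_{-,\gamma}$.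
   Context: Setting: $\mathcal{F}$ a set of prediction models, $L\ge0$ a loss, and a fixed observed sample $(\mathbf{y}_{[i]},\mathbf{X}_{1[i]},\mathbf{X}_{2[i]})$, $i=1,\dots,n$, $n\ge2$. $\hat e_{\text{orig}}(f)=\frac1n\sum_iL\{f,(\mathbf{y}_{[i]},\mathbf{X}_{1[i]},\mathbf{X}_{2[i]})\}$; $\hat e_{\text{switch}}(f)=\frac1{n(n-1)}\sum_i\sum_{j\ne i}L\{f,(\mathbf{y}_{[j]},\mathbf{X}_{1[i]},\mathbf{X}_{2[j]})\}$; $\widehat{MR}(f)=\hat e_{\text{switch}}(f)/\hat e_{\text{orig}}(f)$. For $\gamma\in\mathbb{R}$, $\hat h_{-,\gamma}(f):=\gamma\hat e_{\text{orig}}(f)+\hat e_{\text{switch}}(f)$. Standing assumptions: $\min_{f\in\mathcal{F}}\hat e_{\text{orig}}(f)>0$ and minimizers of $\hat h_{-,\gamma}$ over $\mathcal{F}$ exist. *)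

theory Defs
  imports "HOL-Analysis.Analysis"
begin

definition e_orig ::
  "('f \<Rightarrow> ('y \<times> 'a \<times> 'b) \<Rightarrow> real) \<Rightarrow> nat \<Rightarrow> (nat \<Rightarrow> 'y) \<Rightarrow> (nat \<Rightarrow> 'a) \<Rightarrow> (nat \<Rightarrow> 'b) \<Rightarrow> 'f \<Rightarrow> real"
  where "e_orig L n y X1 X2 f = (1 / real n) * (\<Sum>i<n. L f (y i, X1 i, X2 i))"

definition e_switch ::
  "('f \<Rightarrow> ('y \<times> 'a \<times> 'b) \<Rightarrow> real) \<Rightarrow> nat \<Rightarrow> (nat \<Rightarrow> 'y) \<Rightarrow> (nat \<Rightarrow> 'a) \<Rightarrow> (nat \<Rightarrow> 'b) \<Rightarrow> 'f \<Rightarrow> real"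
  where "e_switch L n y X1 X2 f =
    (1 / (real n * (real n - 1))) * (\<Sum>i<n. \<Sum>j\<in>{..<n} - {i}. L f (y j, X1 i, X2 j))"

definition MR_hat ::
  "('f \<Rightarrow> ('y \<times> 'a \<times> 'b) \<Rightarrow> real) \<Rightarrow> nat \<Rightarrow> (nat \<Rightarrow> 'y) \<Rightarrow> (nat \<Rightarrow> 'a) \<Rightarrow> (nat \<Rightarrow> 'b) \<Rightarrow> 'f \<Rightarrow> real"
  where "MR_hat L n y X1 X2 f = e_switch L n y X1 X2 f / e_orig L n y X1 X2 f"

definition h_minus ::
  "real \<Rightarrow> ('f \<Rightarrow> ('y \<times> 'a \<times> 'b) \<Rightarrow> real) \<Rightarrow> nat \<Rightarrow> (nat \<Rightarrow> 'y) \<Rightarrow> (nat \<Rightarrow> 'a) \<Rightarrow> (nat \<Rightarrow> 'b) \<Rightarrow> 'f \<Rightarrow> real"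
  where "h_minus \<gamma> L n y X1 X2 f = \<gamma> * e_orig L n y X1 X2 f + e_switch L n y X1 X2 f"

end

theory Submission
  imports Defs
begin

text \<open>Since \<open>MR_hat f = h f / e_orig f - \<gamma>\<close>, every bound reduces to \<open>0 \<le> h g \<le> h f\<close>:
  dividing by \<open>e_orig f \<le> \<epsilon>_abs\<close> instead of \<open>\<epsilon>_abs\<close> can only increase the nonnegative
  quotient. In the equality case either both quotients vanish or the denominators agree.\<close>

lemma MR_hat_eq_h_minus_div:
  assumes "e_orig L n y X1 X2 f \<noteq> 0"
  shows "MR_hat L n y X1 X2 f = h_minus \<gamma> L n y X1 X2 f / e_orig L n y X1 X2 f - \<gamma>"
  using assms unfolding MR_hat_def h_minus_def by (simp add: field_simps)

lemma div_le_div_of_le_of_den_le: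
  fixes a b d \<epsilon> :: real
  assumes "0 \<le> a" "a \<le> b" "0 < d" "d \<le> \<epsilon>"
  shows "a / \<epsilon> \<le> b / d"
proof -
  have "a / \<epsilon> \<le> a / d" using assms by (simp add: frac_le)
  also have "\<dots> \<le> b / d" using assms by (simp add: divide_right_mono)
  finally show ?thesis .
qed

theorem lemma14:
  fixes F :: "'f set" and L :: "'f \<Rightarrow> ('y \<times> 'a \<times> 'b) \<Rightarrow> real"
    and n :: nat and y :: "nat \<Rightarrow> 'y" and X1 :: "nat \<Rightarrow> 'a" and X2 :: "nat \<Rightarrow> 'b"
    and \<gamma> \<epsilon>_abs :: real and g :: 'f
  assumes n2: "n \<ge> 2"
    and L_nonneg: "\<And>f z. L f z \<ge> 0"
    and min_orig: "\<exists>f0\<in>F. (\<forall>f\<in>F. e_orig L n y X1 X2 f0 \<le> e_orig L n y X1 X2 f)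
                        \<and> e_orig L n y X1 X2 f0 > 0"
    and eps_pos: "\<epsilon>_abs > 0"
    and g_in: "g \<in> F"
    and g_min: "\<forall>f\<in>F. h_minus \<gamma> L n y X1 X2 g \<le> h_minus \<gamma> L n y X1 X2 f"
  shows "(h_minus \<gamma> L n y X1 X2 g \<ge> 0 \<longrightarrow>
           (\<forall>f\<in>F. e_orig L n y X1 X2 f \<le> \<epsilon>_abs \<longrightarrow>
              h_minus \<gamma> L n y X1 X2 g / \<epsilon>_abs - \<gamma> \<le> MR_hat L n y X1 X2 f)
           \<and> (\<forall>f\<in>F. - \<gamma> \<le> MR_hat L n y X1 X2 f))
       \<and> ((h_minus \<gamma> L n y X1 X2 g \<ge> 0 \<and> e_orig L n y X1 X2 g \<le> \<epsilon>_abs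
            \<and> (h_minus \<gamma> L n y X1 X2 g = 0 \<or> e_orig L n y X1 X2 g = \<epsilon>_abs))
          \<longrightarrow> h_minus \<gamma> L n y X1 X2 g / \<epsilon>_abs - \<gamma> = MR_hat L n y X1 X2 g)"
proof -
  let ?e = "e_orig L n y X1 X2" and ?h = "h_minus \<gamma> L n y X1 X2" and ?MR = "MR_hat L n y X1 X2"
  have e_pos: "?e f > 0" if "f \<in> F" for f using min_orig that by force
  have MR: "?MR f = ?h f / ?e f - \<gamma>" if "f \<in> F" for f
    using e_pos[OF that] by (intro MR_hat_eq_h_minus_div) simp
  have bound: "?h g / \<epsilon>_abs - \<gamma> \<le> ?MR f"
    if "?h g \<ge> 0" "f \<in> F" "?e f \<le> \<epsilon>_abs" for f
  proof -
    have "?h g / \<epsilon>_abs \<le> ?h f / ?e f"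
      using div_le_div_of_le_of_den_le that g_min e_pos by blast
    then show ?thesis using MR[OF \<open>f \<in> F\<close>] by simp
  qed
  have lower: "- \<gamma> \<le> ?MR f" if "?h g \<ge> 0" "f \<in> F" for f
  proof -
    have "0 \<le> ?h f" using that g_min by force
    then show ?thesis using MR[OF \<open>f \<in> F\<close>] e_pos[OF \<open>f \<in> F\<close>] by simp
  qed
  have attained: "?h g / \<epsilon>_abs - \<gamma> = ?MR g" if "?h g = 0 \<or> ?e g = \<epsilon>_abs"
    using that MR[OF g_in] by auto
  show ?thesis using bound lower attained by blast
qed

end
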